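(* Let $p\ge2$. Let $(u_n)\subset L^p(\mathbb{R}^2)$ with $u_n\to u$ a.e. on $\mathbb{R}^2$, where $u\in L^p(\mathbb{R}^2)\setminus\{0\}$. Let $(v_n)$ be bounded in $L^p(\mathbb{R}^2)$ with $\sup_n B_1(|u_n|^p,|v_n|^p)<\infty$. Then there exist $n_0$ and $C>0$ such that $\|v_n\|_*\le C$ for all $n\ge n_0$. Moreover, if $B_1(|u_n|^p,|v_n|^p)\to0$ and $\|v_n\|_{L^p}\to0$, then $\|v_n\|_*\to0$.
   Context: $B_1(f,g):=\int_{\mathbb{R}^2}\int_{\mathbb{R}^2}\log(1+|x-y|)f(x)g(y)\,dx\,dy$ (for nonnegative $f,g$ this is in $[0,\infty]$). $\|v\|_*:=\big(\int_{\mathbb{R}^2}\log(1+|x|)|v|^p\,dx\big)^{1/p}$. *)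

theory Defs
  imports "HOL-Analysis.Analysis"
begin

text \<open>Functions on R^2 are modelled as maps real^2 to complex (this covers real-valued
  functions as a special case). Lebesgue measure on R^2 is lebesgue.\<close>

definition in_Lp :: "real \<Rightarrow> (real^2 \<Rightarrow> complex) \<Rightarrow> bool" where
  "in_Lp p f \<longleftrightarrow> f \<in> borel_measurable lebesgue \<and>
     integrable lebesgue (\<lambda>x. norm (f x) powr p)"

definition Lp_norm :: "real \<Rightarrow> (real^2 \<Rightarrow> complex) \<Rightarrow> real" where
  "Lp_norm p f = (integral\<^sup>L lebesgue (\<lambda>x. norm (f x) powr p)) powr (1 / p)"

definition B1 :: "(real^2 \<Rightarrow> real) \<Rightarrow> (real^2 \<Rightarrow> real) \<Rightarrow> ennreal" where
  "B1 f g = (\<integral>\<^sup>+ x. (\<integral>\<^sup>+ y. ennreal (ln (1 + dist x y) * f x * g y) \<partial>lebesgue) \<partial>lebesgue)"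

definition star_int :: "real \<Rightarrow> (real^2 \<Rightarrow> complex) \<Rightarrow> ennreal" where
  "star_int p v = (\<integral>\<^sup>+ x. ennreal (ln (1 + norm x) * norm (v x) powr p) \<partial>lebesgue)"

definition star_norm :: "real \<Rightarrow> (real^2 \<Rightarrow> complex) \<Rightarrow> ennreal" where
  "star_norm p v = (if star_int p v = top then top
                    else ennreal ((enn2real (star_int p v)) powr (1 / p)))"

end

theory Submission
  imports Defs
begin

text \<open>Since u is not a.e. zero and u_n \<rightarrow> u a.e., there are a set A of positive measure in a
  ball of radius R and a \<delta> > 0 with |u_n| \<ge> \<delta> on A for all large n. For x \<in> A we have
  log(1 + |y|) \<le> log(1 + |x - y|) + log(1 + R); multiplying by |u_n(x)|^p |v_n(y)|^p and
  integrating over x \<in> A and y gives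
  \<delta>^p |A| \<integral> log(1 + |y|) |v_n|^p \<le> B_1(|u_n|^p, |v_n|^p) + \<delta>^p |A| log(1 + R) \<parallel>v_n\<parallel>_p^p,
  from which both claims follow.\<close>

lemma ln_one_plus_norm_le:
  fixes x y :: "'a::real_normed_vector"
  assumes "norm x \<le> R"
  shows "ln (1 + norm y) \<le> ln (1 + dist x y) + ln (1 + R)"
proof -
  have R: "0 \<le> R" using assms norm_ge_zero order_trans by blast
  have pos: "0 < 1 + dist x y" "0 < 1 + R" using R zero_le_dist[of x y] by linarith+
  have "norm y \<le> dist x y + norm x"
    by (metis dist_norm norm_minus_commute norm_triangle_sub add.commute)
  also have "\<dots> \<le> dist x y + R + dist x y * R"
    using assms mult_nonneg_nonneg[OF zero_le_dist R, of x y] by linarith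
  finally have "1 + norm y \<le> (1 + dist x y) * (1 + R)" by (simp add: algebra_simps)
  then have "ln (1 + norm y) \<le> ln ((1 + dist x y) * (1 + R))"
    by (rule ln_mono) (auto intro: add_pos_nonneg)
  also have "\<dots> = ln (1 + dist x y) + ln (1 + R)"
    using pos by (rule ln_mult_pos)
  finally show ?thesis .
qed

lemma emeasure_mult_le_nn_integral:
  assumes "A \<in> sets M" "\<And>x. x \<in> A \<Longrightarrow> t \<le> h x"
  shows "t * emeasure M A \<le> (\<integral>\<^sup>+x. h x \<partial>M)"
proof -
  have "t * emeasure M A = (\<integral>\<^sup>+x. t * indicator A x \<partial>M)"
    using assms(1) by (simp add: nn_integral_cmult_indicator)
  also have "\<dots> \<le> (\<integral>\<^sup>+x. h x \<partial>M)"
    using assms(2) by (intro nn_integral_mono) (auto split: split_indicator)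
  finally show ?thesis .
qed

lemma nn_integral_log_weight_le:
  fixes x :: "'a::euclidean_space" and g :: "'a \<Rightarrow> real"
  assumes x: "norm x \<le> R" and c: "0 \<le> c" "c \<le> t"
    and g: "\<And>y. 0 \<le> g y" "g \<in> borel_measurable lebesgue"
  shows "ennreal c * (\<integral>\<^sup>+y. ennreal (ln (1 + norm y) * g y) \<partial>lebesgue)
    \<le> (\<integral>\<^sup>+y. ennreal (ln (1 + dist x y) * t * g y) \<partial>lebesgue)
       + ennreal (c * ln (1 + R)) * (\<integral>\<^sup>+y. ennreal (g y) \<partial>lebesgue)"
proof -
  have R: "0 \<le> R" using x norm_ge_zero order_trans by blast
  have [measurable]: "g \<in> borel_measurable lebesgue" by (rule g(2))
  have "(\<lambda>y. ln (1 + dist x y)) \<in> borel_measurable lborel" "(\<lambda>y. ln (1 + norm y)) \<in> borel_measurable lborel"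
    by measurable
  then have [measurable]: "(\<lambda>y. ln (1 + dist x y)) \<in> borel_measurable lebesgue"
      "(\<lambda>y. ln (1 + norm y)) \<in> borel_measurable lebesgue"
    by (simp_all add: measurable_completion)
  have "ennreal c * (\<integral>\<^sup>+y. ennreal (ln (1 + norm y) * g y) \<partial>lebesgue)
      = (\<integral>\<^sup>+y. ennreal (c * (ln (1 + norm y) * g y)) \<partial>lebesgue)"
    using c by (simp add: nn_integral_cmult[symmetric] ennreal_mult')
  also have "\<dots> \<le> (\<integral>\<^sup>+y. ennreal (ln (1 + dist x y) * t * g y) + ennreal (c * ln (1 + R)) * ennreal (g y) \<partial>lebesgue)"
  proof (intro nn_integral_mono)
    fix y
    have "c * ln (1 + norm y) \<le> c * ln (1 + dist x y) + c * ln (1 + R)"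
      using ln_one_plus_norm_le[OF x, of y] c(1) by (simp add: distrib_left[symmetric] mult_left_mono)
    also have "\<dots> \<le> ln (1 + dist x y) * t + c * ln (1 + R)"
      using mult_right_mono[OF c(2), of "ln (1 + dist x y)"] by (simp add: mult.commute)
    finally have "c * (ln (1 + norm y) * g y) \<le> ln (1 + dist x y) * t * g y + c * ln (1 + R) * g y"
      using g(1)[of y] by (metis distrib_right mult.assoc mult_right_mono)
    then have "ennreal (c * (ln (1 + norm y) * g y))
        \<le> ennreal (ln (1 + dist x y) * t * g y + c * ln (1 + R) * g y)"
      by (rule ennreal_leI)
    also have "\<dots> = ennreal (ln (1 + dist x y) * t * g y) + ennreal (c * ln (1 + R)) * ennreal (g y)"
      using c R g(1)[of y] by (simp add: ennreal_mult)
    finally show "ennreal (c * (ln (1 + norm y) * g y))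
        \<le> ennreal (ln (1 + dist x y) * t * g y) + ennreal (c * ln (1 + R)) * ennreal (g y)" .
  qed
  also have "\<dots> = (\<integral>\<^sup>+y. ennreal (ln (1 + dist x y) * t * g y) \<partial>lebesgue)
       + ennreal (c * ln (1 + R)) * (\<integral>\<^sup>+y. ennreal (g y) \<partial>lebesgue)"
    by (simp add: nn_integral_add nn_integral_cmult)
  finally show ?thesis .
qed

lemma nn_integral_log_weight_le_B1:
  fixes f g :: "real^2 \<Rightarrow> real"
  assumes A: "A \<in> lmeasurable" "A \<subseteq> cball 0 R" "0 < measure lebesgue A"
    and c: "0 < c" "\<And>x. x \<in> A \<Longrightarrow> c \<le> f x"
    and g: "\<And>y. 0 \<le> g y" "g \<in> borel_measurable lebesgue"
    and b: "B1 f g = ennreal b" "0 \<le> b"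
    and q: "(\<integral>\<^sup>+y. ennreal (g y) \<partial>lebesgue) = ennreal q" "0 \<le> q"
  shows "(\<integral>\<^sup>+y. ennreal (ln (1 + norm y) * g y) \<partial>lebesgue)
    \<le> ennreal (b / (measure lebesgue A * c) + ln (1 + R) * q)"
proof -
  define a where "a = measure lebesgue A"
  define S where "S = (\<integral>\<^sup>+y. ennreal (ln (1 + norm y) * g y) \<partial>lebesgue)"
  define K where "K = ennreal (c * ln (1 + R)) * ennreal q"
  have a: "0 < a" "emeasure lebesgue A = ennreal a"
    using A by (simp_all add: a_def emeasure_eq_measure2)
  obtain x0 where "x0 \<in> A" using A(3) by (metis equals0I measure_empty less_irrefl)
  then have "norm x0 \<le> R" using A(2) by auto
  then have R: "0 \<le> R" using norm_ge_zero order_trans by blast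
  have "(ennreal c * S - K) * ennreal a \<le> B1 f g"
    unfolding B1_def a(2)[symmetric]
  proof (rule emeasure_mult_le_nn_integral)
    show "A \<in> sets lebesgue" using A(1) by (rule fmeasurableD)
    fix x assume "x \<in> A"
    then have "norm x \<le> R" using A(2) by auto
    from nn_integral_log_weight_le[OF this less_imp_le[OF c(1)] c(2)[OF \<open>x \<in> A\<close>] g]
    show "ennreal c * S - K \<le> (\<integral>\<^sup>+y. ennreal (ln (1 + dist x y) * f x * g y) \<partial>lebesgue)"
      unfolding S_def K_def q(1) by (simp add: ennreal_minus_le_iff ennreal_mult_eq_top_iff add.commute)
  qed
  also have "\<dots> = ennreal (b / a) * ennreal a"
    using a(1) b by (simp add: ennreal_mult[symmetric])
  finally have "ennreal c * S - K \<le> ennreal (b / a)"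
    using a(1) by (simp add: ennreal_mult_le_mult_iff mult.commute[of _ "ennreal a"])
  then have "ennreal c * S \<le> ennreal (b / a) + K"
    unfolding K_def by (simp add: ennreal_minus_le_iff add.commute)
  also have "\<dots> = ennreal (b / a + c * ln (1 + R) * q)"
    unfolding K_def using a(1) c(1) b(2) q(2) R by (simp add: ennreal_mult)
  also have "b / a + c * ln (1 + R) * q = c * (b / (a * c) + ln (1 + R) * q)"
    using a(1) c(1) by (simp add: field_simps)
  also have "ennreal \<dots> = ennreal c * ennreal (b / (a * c) + ln (1 + R) * q)"
    using c(1) by (simp add: ennreal_mult')
  finally show ?thesis
    unfolding S_def a_def using c(1) by (simp add: ennreal_mult_le_mult_iff)
qed

lemma star_norm_le:
  assumes "0 < p" "star_int p v \<le> ennreal W" "0 \<le> W"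
  shows "star_norm p v \<le> ennreal (W powr (1 / p))"
proof -
  obtain s where s: "star_int p v = ennreal s" "0 \<le> s" "s \<le> W"
    using assms(2,3) by (cases "star_int p v") (auto simp: top_unique)
  then have "s powr (1 / p) \<le> W powr (1 / p)" using assms(1) by (intro powr_mono2) auto
  then show ?thesis using s unfolding star_norm_def by (simp add: ennreal_leI)
qed

lemma nn_integral_norm_powr_eq_integral:
  assumes "in_Lp p v"
  shows "(\<integral>\<^sup>+y. ennreal (norm (v y) powr p) \<partial>lebesgue) = ennreal (\<integral>y. norm (v y) powr p \<partial>lebesgue)"
  using assms unfolding in_Lp_def by (intro nn_integral_eq_integral) auto

lemma Lp_norm_nonneg [simp]: "0 \<le> Lp_norm p v"
  unfolding Lp_norm_def by simp

lemma Lp_norm_powr: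
  assumes "0 < p"
  shows "Lp_norm p v powr p = (\<integral>y. norm (v y) powr p \<partial>lebesgue)"
proof -
  have "0 \<le> (\<integral>y. norm (v y) powr p \<partial>lebesgue)" by (intro integral_nonneg_AE) auto
  then show ?thesis unfolding Lp_norm_def using assms by (simp add: powr_powr)
qed

lemma eventually_norm_ge_inverse_Suc:
  fixes X :: "nat \<Rightarrow> 'a::real_normed_vector"
  assumes "X \<longlonglongrightarrow> l" "l \<noteq> 0"
  shows "eventually (\<lambda>N. \<forall>n\<ge>N. 1 / real (Suc N) \<le> norm (X n)) sequentially"
proof -
  define e where "e = norm l / 2"
  have "e < norm l" "0 < e" using assms(2) by (simp_all add: e_def)
  have "eventually (\<lambda>n. e < norm (X n)) sequentially"
    using tendsto_norm[OF assms(1)] \<open>e < norm l\<close> by (rule order_tendstoD)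
  then have "eventually (\<lambda>N. \<forall>n\<ge>N. e < norm (X n)) sequentially"
    by (rule eventually_all_ge_at_top)
  moreover have "eventually (\<lambda>N. inverse (real (Suc N)) < e) sequentially"
    using LIMSEQ_inverse_real_of_nat \<open>0 < e\<close> by (rule order_tendstoD)
  ultimately show ?thesis
    by eventually_elim (auto simp: inverse_eq_divide intro: less_imp_le order.strict_trans)
qed

lemma lower_bound_on_set_of_positive_measure:
  fixes us :: "nat \<Rightarrow> 'a::euclidean_space \<Rightarrow> 'b::real_normed_vector"
  assumes meas: "\<And>n. us n \<in> borel_measurable lebesgue"
    and conv: "AE x in lebesgue. (\<lambda>n. us n x) \<longlonglongrightarrow> u x"
    and nz: "\<not> (AE x in lebesgue. u x = 0)"
  obtains N A where "A \<in> lmeasurable" "A \<subseteq> cball 0 (real N)" "0 < measure lebesgue A"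
    "\<And>n x. N \<le> n \<Longrightarrow> x \<in> A \<Longrightarrow> 1 / real (Suc N) \<le> norm (us n x)"
proof -
  define E where "E N = {x. norm x \<le> real N \<and> (\<forall>n\<ge>N. 1 / real (Suc N) \<le> norm (us n x))}" for N
  have "(\<lambda>x::'a. norm x) \<in> borel_measurable lborel" by measurable
  then have [measurable]: "(\<lambda>x::'a. norm x) \<in> borel_measurable lebesgue"
    by (simp add: measurable_completion)
  have [measurable]: "us n \<in> borel_measurable lebesgue" for n by (rule meas)
  have "Measurable.pred lebesgue (\<lambda>x. x \<in> E N)" for N unfolding E_def by measurable
  then have "E N \<in> sets lebesgue" for N by (simp add: pred_def)
  moreover have E_cball: "E N \<subseteq> cball 0 (real N)" for N by (auto simp: E_def)
  ultimately have E: "E N \<in> lmeasurable" for N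
    by (intro bounded_set_imp_lmeasurable bounded_subset[OF bounded_cball])
  have "\<exists>N. measure lebesgue (E N) \<noteq> 0"
  proof (rule ccontr)
    assume "\<not> ?thesis"
    then have "measure lebesgue (E N) = 0" for N by blast
    then have "E N \<in> null_sets lebesgue" for N
      using E[of N] by (simp add: null_setsI emeasure_eq_measure2 fmeasurableD)
    then have "AE x in lebesgue. \<forall>N. x \<notin> E N"
      by (simp add: AE_all_countable AE_not_in)
    then have "AE x in lebesgue. u x = 0" using conv
    proof eventually_elim
      case (elim x)
      show "u x = 0"
      proof (rule ccontr)
        assume "u x \<noteq> 0"
        have "eventually (\<lambda>N. norm x \<le> real N) sequentially"
          using filterlim_real_sequentially unfolding filterlim_at_top by blast
        then have "eventually (\<lambda>N. x \<in> E N) sequentially"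
          using eventually_norm_ge_inverse_Suc[OF elim(2) \<open>u x \<noteq> 0\<close>]
          unfolding E_def by eventually_elim simp
        then obtain N where "x \<in> E N" unfolding eventually_sequentially by blast
        with elim(1) show False by blast
      qed
    qed
    with nz show False by blast
  qed
  then obtain N where N: "measure lebesgue (E N) \<noteq> 0" by blast
  show thesis
  proof (rule that)
    show "E N \<in> lmeasurable" "E N \<subseteq> cball 0 (real N)" by (rule E E_cball)+
    show "0 < measure lebesgue (E N)" using N by (simp add: zero_less_measure_iff)
    show "1 / real (Suc N) \<le> norm (us n x)" if "N \<le> n" "x \<in> E N" for n x
      using that by (simp add: E_def)
  qed
qed

lemma star_norm_le_B1_Lp_norm:
  fixes us vs :: "nat \<Rightarrow> real^2 \<Rightarrow> complex"
  assumes p: "0 < p"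
    and us: "\<And>n. us n \<in> borel_measurable lebesgue"
    and conv: "AE x in lebesgue. (\<lambda>n. us n x) \<longlonglongrightarrow> u x"
    and nz: "\<not> (AE x in lebesgue. u x = 0)"
    and vs: "\<And>n. in_Lp p (vs n)"
    and fin: "\<And>n. B1 (\<lambda>x. norm (us n x) powr p) (\<lambda>y. norm (vs n y) powr p) \<noteq> top"
  shows "\<exists>N K. 0 \<le> K \<and> (\<forall>n\<ge>N.
      star_norm p (vs n) \<le> ennreal ((K * (enn2real (B1 (\<lambda>x. norm (us n x) powr p) (\<lambda>y. norm (vs n y) powr p))
        + Lp_norm p (vs n) powr p)) powr (1 / p)))"
proof -
  obtain A N where A: "A \<in> lmeasurable" "A \<subseteq> cball 0 (real N)" "0 < measure lebesgue A"
    and lower: "\<And>n x. N \<le> n \<Longrightarrow> x \<in> A \<Longrightarrow> 1 / real (Suc N) \<le> norm (us n x)"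
    using lower_bound_on_set_of_positive_measure[OF us conv nz] by metis
  define c where "c = (1 / real (Suc N)) powr p"
  define K where "K = max (1 / (measure lebesgue A * c)) (ln (1 + real N))"
  have c: "0 < c" by (simp add: c_def)
  have K: "0 \<le> K" unfolding K_def by (intro max.coboundedI2) simp
  show ?thesis
  proof (intro exI[of _ N] exI[of _ K] conjI K allI impI)
    fix n assume "N \<le> n"
    define b where "b = enn2real (B1 (\<lambda>x. norm (us n x) powr p) (\<lambda>y. norm (vs n y) powr p))"
    define q where "q = Lp_norm p (vs n) powr p"
    have b: "B1 (\<lambda>x. norm (us n x) powr p) (\<lambda>y. norm (vs n y) powr p) = ennreal b" "0 \<le> b"
      using fin[of n] by (simp_all add: b_def less_top)
    have q: "(\<integral>\<^sup>+y. ennreal (norm (vs n y) powr p) \<partial>lebesgue) = ennreal q" "0 \<le> q"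
      unfolding q_def Lp_norm_powr[OF p] using nn_integral_norm_powr_eq_integral[OF vs]
      by (simp_all add: integral_nonneg_AE)
    have "star_int p (vs n) \<le> ennreal (b / (measure lebesgue A * c) + ln (1 + real N) * q)"
      unfolding star_int_def
    proof (rule nn_integral_log_weight_le_B1[OF A c _ _ _ b q])
      show "c \<le> norm (us n x) powr p" if "x \<in> A" for x
        unfolding c_def using lower[OF \<open>N \<le> n\<close> that] p by (intro powr_mono2) auto
      show "(\<lambda>y. norm (vs n y) powr p) \<in> borel_measurable lebesgue"
        using vs[of n] by (simp add: in_Lp_def borel_measurable_integrable)
    qed simp
    also have "\<dots> \<le> ennreal (K * (b + q))"
    proof (rule ennreal_leI)
      have "b / (measure lebesgue A * c) = 1 / (measure lebesgue A * c) * b" by simp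
      also have "\<dots> \<le> K * b" using b(2) by (intro mult_right_mono) (simp_all add: K_def)
      finally have "b / (measure lebesgue A * c) \<le> K * b" .
      moreover have "ln (1 + real N) * q \<le> K * q"
        using q(2) by (intro mult_right_mono) (simp_all add: K_def)
      ultimately show "b / (measure lebesgue A * c) + ln (1 + real N) * q \<le> K * (b + q)"
        by (simp add: distrib_left)
    qed
    finally show "star_norm p (vs n) \<le> ennreal ((K * (b + q)) powr (1 / p))"
      using K b(2) q(2) by (intro star_norm_le[OF p]) auto
  qed
qed

lemma bounded_by_powr_bound:
  fixes s :: "nat \<Rightarrow> ennreal" and b l :: "nat \<Rightarrow> real"
  assumes p: "0 < p" and K: "0 \<le> K"
    and s: "\<And>n. N \<le> n \<Longrightarrow> s n \<le> ennreal ((K * (b n + l n powr p)) powr (1 / p))"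
    and b: "\<And>n. 0 \<le> b n" "\<And>n. b n \<le> B" and l: "\<And>n. 0 \<le> l n" "\<And>n. l n \<le> M"
  shows "\<exists>C>0. \<forall>n\<ge>N. s n \<le> ennreal C"
proof (intro exI conjI allI impI)
  define C where "C = max 1 ((K * (B + M powr p)) powr (1 / p))"
  show "0 < C" by (simp add: C_def)
  fix n assume "N \<le> n"
  have "l n powr p \<le> M powr p" using l p by (intro powr_mono2) auto
  then have "K * (b n + l n powr p) \<le> K * (B + M powr p)"
    using K b(2)[of n] by (intro mult_left_mono) auto
  then have "(K * (b n + l n powr p)) powr (1 / p) \<le> C"
    unfolding C_def using K b(1)[of n] p by (intro max.coboundedI2 powr_mono2) auto
  with s[OF \<open>N \<le> n\<close>] show "s n \<le> ennreal C" by (meson ennreal_leI order_trans)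
qed

lemma tendsto_zero_by_powr_bound:
  fixes s :: "nat \<Rightarrow> ennreal" and b l :: "nat \<Rightarrow> real"
  assumes p: "0 < p" and K: "0 \<le> K"
    and s: "\<And>n. N \<le> n \<Longrightarrow> s n \<le> ennreal ((K * (b n + l n powr p)) powr (1 / p))"
    and b: "b \<longlonglongrightarrow> 0" "\<And>n. 0 \<le> b n" and l: "l \<longlonglongrightarrow> 0" "\<And>n. 0 \<le> l n"
  shows "s \<longlonglongrightarrow> 0"
proof -
  have "(\<lambda>n. l n powr p) \<longlonglongrightarrow> 0" using l p by (intro tendsto_zero_powrI) auto
  with b(1) have "(\<lambda>n. K * (b n + l n powr p)) \<longlonglongrightarrow> 0"
    by (intro tendsto_mult_right_zero tendsto_add_zero)
  then have "(\<lambda>n. (K * (b n + l n powr p)) powr (1 / p)) \<longlonglongrightarrow> 0"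
    by (rule tendsto_zero_powrI[where b = "1 / p"]) (use p K b(2) l(2) in auto)
  then have "(\<lambda>n. ennreal ((K * (b n + l n powr p)) powr (1 / p))) \<longlonglongrightarrow> ennreal 0"
    by (rule tendsto_ennrealI)
  then have upper: "(\<lambda>n. ennreal ((K * (b n + l n powr p)) powr (1 / p))) \<longlonglongrightarrow> 0" by simp
  show ?thesis
    by (rule tendsto_sandwich[OF _ _ tendsto_const upper])
      (auto simp: eventually_sequentially intro!: exI[of _ N] s)
qed

theorem lemma3p2:
  fixes p :: real and u :: "real^2 \<Rightarrow> complex"
    and us vs :: "nat \<Rightarrow> real^2 \<Rightarrow> complex"
  assumes p: "p \<ge> 2"
    and us_Lp: "\<And>n. in_Lp p (us n)"
    and u_Lp: "in_Lp p u"
    and u_nz: "\<not> (AE x in lebesgue. u x = 0)"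
    and ae_conv: "AE x in lebesgue. (\<lambda>n. us n x) \<longlonglongrightarrow> u x"
    and vs_Lp: "\<And>n. in_Lp p (vs n)"
    and vs_bdd: "\<exists>M. \<forall>n. Lp_norm p (vs n) \<le> M"
    and B_bdd: "(SUP n. B1 (\<lambda>x. norm (us n x) powr p) (\<lambda>y. norm (vs n y) powr p)) < top"
  shows "(\<exists>n0 C. C > 0 \<and> (\<forall>n\<ge>n0. star_norm p (vs n) \<le> ennreal C))
       \<and> (((\<lambda>n. B1 (\<lambda>x. norm (us n x) powr p) (\<lambda>y. norm (vs n y) powr p)) \<longlonglongrightarrow> 0
            \<and> (\<lambda>n. Lp_norm p (vs n)) \<longlonglongrightarrow> 0)
          \<longrightarrow> (\<lambda>n. star_norm p (vs n)) \<longlonglongrightarrow> 0)"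
proof -
  have p0: "0 < p" using p by simp
  have us_meas: "\<And>n. us n \<in> borel_measurable lebesgue" using us_Lp by (simp add: in_Lp_def)
  define \<beta> where "\<beta> n = B1 (\<lambda>x. norm (us n x) powr p) (\<lambda>y. norm (vs n y) powr p)" for n
  have \<beta>_le: "\<beta> n \<le> (SUP n. \<beta> n)" for n by (rule SUP_upper) simp
  have \<beta>_bdd: "(SUP n. \<beta> n) < top" using B_bdd by (simp add: \<beta>_def)
  have \<beta>_fin: "\<And>n. B1 (\<lambda>x. norm (us n x) powr p) (\<lambda>y. norm (vs n y) powr p) \<noteq> top"
  proof -
    fix n
    have "\<beta> n \<noteq> top" using \<beta>_le[of n] \<beta>_bdd by (auto simp: top_unique)
    then show "B1 (\<lambda>x. norm (us n x) powr p) (\<lambda>y. norm (vs n y) powr p) \<noteq> top" by (simp add: \<beta>_def)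
  qed
  from star_norm_le_B1_Lp_norm[OF p0 us_meas ae_conv u_nz vs_Lp \<beta>_fin]
  obtain N K where K: "0 \<le> K" and estimate: "\<And>n. N \<le> n \<Longrightarrow>
      star_norm p (vs n) \<le> ennreal ((K * (enn2real (\<beta> n) + Lp_norm p (vs n) powr p)) powr (1 / p))"
    unfolding \<beta>_def by auto
  show ?thesis
  proof (intro conjI impI)
    obtain M where M: "\<And>n. Lp_norm p (vs n) \<le> M" using vs_bdd by blast
    have \<beta>_bound: "\<And>n. enn2real (\<beta> n) \<le> enn2real (SUP n. \<beta> n)"
      using \<beta>_le \<beta>_bdd by (intro enn2real_mono) auto
    have "\<exists>C>0. \<forall>n\<ge>N. star_norm p (vs n) \<le> ennreal C"
      by (rule bounded_by_powr_bound[OF p0 K estimate enn2real_nonneg \<beta>_bound Lp_norm_nonneg M])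
    then show "\<exists>n0 C. C > 0 \<and> (\<forall>n\<ge>n0. star_norm p (vs n) \<le> ennreal C)" by blast
  next
    assume lim: "(\<lambda>n. B1 (\<lambda>x. norm (us n x) powr p) (\<lambda>y. norm (vs n y) powr p)) \<longlonglongrightarrow> 0
      \<and> (\<lambda>n. Lp_norm p (vs n)) \<longlonglongrightarrow> 0"
    then have "\<beta> \<longlonglongrightarrow> ennreal 0" by (simp add: \<beta>_def[abs_def])
    then have \<beta>_lim: "(\<lambda>n. enn2real (\<beta> n)) \<longlonglongrightarrow> 0" by (rule tendsto_enn2real) simp
    from lim have Lp_lim: "(\<lambda>n. Lp_norm p (vs n)) \<longlonglongrightarrow> 0" by blast
    show "(\<lambda>n. star_norm p (vs n)) \<longlonglongrightarrow> 0"
      by (rule tendsto_zero_by_powr_bound[OF p0 K estimate \<beta>_lim enn2real_nonneg Lp_lim Lp_norm_nonneg])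
  qed
qed

end
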